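(* In the coprime construction of the hider strategy $y$, let $v$ be the first node of a segment. Then $g(v-1)\le y([1,v-1])$ and $g(v+r-1)\le y([1,v-1])+\frac1w$ (i.e., the segment rule holds for $r^*=r$).
   Context: Let $k\ge2$, $n>2^k$, $c=2^k-2$ with $\gcd(c,n-1)=1$, and let $h,w$ be the positive integers with $h(n-1)-wc=1$ and $w\in\{1,\dots,n-2\}$ minimal. Let $g(v)=v\frac{h}{wc}$, $r=\lfloor c/h\rfloor$. For integers $a\le b$, $[a,b]=\{a,\dots,b\}$ (empty if $a>b$), and $y(S)=\sum_{i\in S}y_i$. Construction of $y\in\mathbb{R}^{\{0,\dots,n-1\}}$: $y_0=y_{n-1}=0$; starting at $v=1$, repeatedly choose the largest $r^*\in\{r,r+1\}$ satisfying the segment rule $g(v+r^*-1)\le y([1,v-1])+\frac1w$, set $y_i=\frac{1}{r^*w}$ for $i\in\{v,\dots,v+r^*-1\}$ (the set $\{v,\dots,v+r^*-1\}$ is called a segment, with first node $v$), and replace $v$ by $v+r^*$; stop when $v>n-2$. *)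

theory Defs
  imports Complex_Main
begin

definition gfun :: "nat \<Rightarrow> nat \<Rightarrow> nat \<Rightarrow> real \<Rightarrow> real" where
  "gfun c h w v = v * real h / (real w * real c)"

definition rr :: "nat \<Rightarrow> nat \<Rightarrow> nat" where
  "rr c h = nat \<lfloor>real c / real h\<rfloor>"

text \<open>State of the construction after j segment steps: the next first node v and the
  values y assigned so far (all other entries 0).\<close>
primrec seg_state :: "nat \<Rightarrow> nat \<Rightarrow> nat \<Rightarrow> nat \<Rightarrow> nat \<Rightarrow> nat \<times> (nat \<Rightarrow> real)" where
  "seg_state n c h w 0 = (1, \<lambda>i. 0)"
| "seg_state n c h w (Suc j) =
     (let (v, y) = seg_state n c h w j in
      if v > n - 2 then (v, y)
      else
        (let S = (\<Sum>i\<in>{1..v-1}. y i);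
             rs = (if gfun c h w (real (v + (rr c h + 1) - 1)) \<le> S + 1 / real w
                   then rr c h + 1 else rr c h)
         in (v + rs, \<lambda>i. if v \<le> i \<and> i \<le> v + rs - 1 then 1 / (real rs * real w) else y i)))"

text \<open>The final hider strategy y on nodes {0..n-1}; y_0 = y_{n-1} = 0.
  The process stops after at most n steps since each step advances v by r* \<ge> 1.\<close>
definition hider_y :: "nat \<Rightarrow> nat \<Rightarrow> nat \<Rightarrow> nat \<Rightarrow> nat \<Rightarrow> real" where
  "hider_y n c h w i = (if i = 0 \<or> i \<ge> n - 1 then 0 else snd (seg_state n c h w n) i)"

definition seg_first :: "nat \<Rightarrow> nat \<Rightarrow> nat \<Rightarrow> nat \<Rightarrow> nat \<Rightarrow> bool" where
  "seg_first n c h w v \<longleftrightarrow> (\<exists>j. v = fst (seg_state n c h w j) \<and> v \<le> n - 2)"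

end

theory Submission
  imports Defs
begin

text \<open>The first inequality is an invariant of the construction.  If the segment rule accepts
  \<open>r + 1\<close>, the prefix sum grows by exactly \<open>1/w\<close>, which is what the rule compares \<open>g\<close> with;
  otherwise \<open>r* = r\<close>, and as \<open>r h \<le> c\<close> the function \<open>g\<close>, of slope \<open>h/(wc)\<close>, grows by at most
  \<open>1/w\<close> over \<open>r\<close> nodes.  This slope bound also gives the second inequality.  Entries of \<open>y\<close> left
  of the current node are never changed later, so the invariant transfers to the final \<open>y\<close> once
  the construction is known to stop within \<open>n\<close> steps.  That needs \<open>r \<ge> 1\<close>, i.e. \<open>h \<le> c\<close>, which
  follows from \<open>h(n-1) = 1 + wc\<close> with \<open>w < n-1\<close>.\<close>

definition seg_len :: "nat \<Rightarrow> nat \<Rightarrow> nat \<Rightarrow> nat \<Rightarrow> real \<Rightarrow> nat" where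
  "seg_len c h w v S =
     (if gfun c h w (real (v + (rr c h + 1) - 1)) \<le> S + 1 / real w then rr c h + 1 else rr c h)"

lemma seg_state_Suc_eq:
  assumes "seg_state n c h w j = (v, y)"
  shows "seg_state n c h w (Suc j) =
    (if n - 2 < v then (v, y)
     else let r = seg_len c h w v (\<Sum>i\<in>{1..v-1}. y i)
          in (v + r, \<lambda>i. if v \<le> i \<and> i \<le> v + r - 1 then 1 / (real r * real w) else y i))"
  using assms by (simp add: seg_len_def Let_def)

lemma seg_state_fst_ge_1: "1 \<le> fst (seg_state n c h w j)"
proof (induction j)
  case (Suc j)
  obtain v y where "seg_state n c h w j = (v, y)" by fastforce
  with Suc show ?case by (simp add: seg_state_Suc_eq Let_def)
qed simp

lemma seg_state_fst_mono:
  assumes "j \<le> j'"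
  shows "fst (seg_state n c h w j) \<le> fst (seg_state n c h w j')"
proof (rule lift_Suc_mono_le[OF _ assms])
  fix i
  obtain v y where "seg_state n c h w i = (v, y)" by fastforce
  then show "fst (seg_state n c h w i) \<le> fst (seg_state n c h w (Suc i))"
    by (simp add: seg_state_Suc_eq Let_def)
qed

lemma seg_state_snd_stable:
  assumes "i < fst (seg_state n c h w j)" "j \<le> j'"
  shows "snd (seg_state n c h w j') i = snd (seg_state n c h w j) i"
  using assms(2)
proof (induction j' rule: dec_induct)
  case (step m)
  obtain v y where st: "seg_state n c h w m = (v, y)" by fastforce
  have "i < v"
    using assms(1) seg_state_fst_mono[OF step.hyps(1), of n c h w] st by simp
  with st step.IH show ?case by (simp add: seg_state_Suc_eq Let_def)
qed simp

lemma seg_state_fst_progress: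
  assumes "1 \<le> rr c h"
  shows "j < fst (seg_state n c h w j) \<or> n - 2 < fst (seg_state n c h w j)"
proof (induction j)
  case (Suc j)
  obtain v y where "seg_state n c h w j = (v, y)" by fastforce
  with Suc assms show ?case by (auto simp add: seg_state_Suc_eq seg_len_def Let_def)
qed simp

lemma gfun_add_rr_le: "gfun c h w (x + real (rr c h)) \<le> gfun c h w x + 1 / real w"
proof (cases "c = 0 \<or> h = 0")
  case False
  have "real (rr c h) \<le> real c / real h"
    unfolding rr_def using False by simp
  then have "real (rr c h) * real h / (real w * real c) \<le> real c / (real w * real c)"
    using False by (intro divide_right_mono) (simp_all add: field_simps)
  also have "\<dots> \<le> 1 / real w"
    using False by simp
  finally show ?thesis
    unfolding gfun_def by (simp add: add_divide_distrib distrib_right)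
qed (auto simp add: gfun_def rr_def)

lemma gfun_shift_rr_le:
  assumes "1 \<le> v"
  shows "gfun c h w (real (v + rr c h - 1)) \<le> gfun c h w (real (v - 1)) + 1 / real w"
proof -
  have "real (v + rr c h - 1) = real (v - 1) + real (rr c h)"
    using assms by simp
  then show ?thesis
    using gfun_add_rr_le[of c h w "real (v - 1)"] by simp
qed

lemma seg_rule_seg_len:
  assumes "1 \<le> v" "gfun c h w (real (v - 1)) \<le> S"
  shows "gfun c h w (real (v + seg_len c h w v S - 1)) \<le> S + 1 / real w"
proof (cases "seg_len c h w v S = rr c h")
  case True
  with gfun_shift_rr_le[OF assms(1), of c h w] assms(2) show ?thesis
    by simp
next
  case False
  then show ?thesis by (simp add: seg_len_def split: if_splits)
qed

lemma seg_state_prefix_sum_ge: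
  "gfun c h w (real (fst (seg_state n c h w j) - 1))
     \<le> (\<Sum>i\<in>{1..fst (seg_state n c h w j) - 1}. snd (seg_state n c h w j) i)"
proof (induction j)
  case 0
  then show ?case by (simp add: gfun_def)
next
  case (Suc j)
  obtain v y where st: "seg_state n c h w j = (v, y)" by fastforce
  define S where "S = (\<Sum>i\<in>{1..v-1}. y i)"
  define r where "r = seg_len c h w v S"
  have v1: "1 \<le> v"
    using seg_state_fst_ge_1[of n c h w j] st by simp
  have IH: "gfun c h w (real (v - 1)) \<le> S"
    using Suc st by (simp add: S_def)
  show ?case
  proof (cases "n - 2 < v")
    case True
    with IH st show ?thesis by (simp add: seg_state_Suc_eq S_def)
  next
    case False
    let ?y' = "\<lambda>i. if v \<le> i \<and> i \<le> v + r - 1 then 1 / (real r * real w) else y i"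
    have step: "seg_state n c h w (Suc j) = (v + r, ?y')"
      unfolding seg_state_Suc_eq[OF st] if_not_P[OF False] Let_def S_def[symmetric] r_def[symmetric]
      by (rule refl)
    have "{1..v + r - 1} = {1..v-1} \<union> {v..v + r - 1}"
      using v1 by auto
    then have "(\<Sum>i\<in>{1..v + r - 1}. ?y' i) = (\<Sum>i\<in>{1..v-1}. ?y' i) + (\<Sum>i\<in>{v..v + r - 1}. ?y' i)"
      by (simp add: sum.union_disjoint)
    also have "(\<Sum>i\<in>{1..v-1}. ?y' i) = S"
      unfolding S_def by (rule sum.cong) auto
    also have "(\<Sum>i\<in>{v..v + r - 1}. ?y' i) = real r * (1 / (real r * real w))"
      using v1 by simp
    finally have "(\<Sum>i\<in>{1..v + r - 1}. ?y' i) = S + real r * (1 / (real r * real w))" .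
    moreover have "gfun c h w (real (v + r - 1)) \<le> S + 1 / real w"
      using seg_rule_seg_len[OF v1 IH] by (simp add: r_def)
    ultimately show ?thesis
      using IH unfolding step by (cases "r = 0") simp_all
  qed
qed

lemma hider_y_eq_seg_state:
  assumes "1 \<le> i" "i < n - 1" "i < fst (seg_state n c h w j)" "j \<le> n"
  shows "hider_y n c h w i = snd (seg_state n c h w j) i"
  using assms seg_state_snd_stable[OF assms(3,4)] by (simp add: hider_y_def)

lemma seg_first_prefix_sum_ge:
  assumes "1 \<le> rr c h" "seg_first n c h w v"
  shows "gfun c h w (real (v - 1)) \<le> (\<Sum>i\<in>{1..v-1}. hider_y n c h w i)"
proof -
  obtain j where vj: "v = fst (seg_state n c h w j)" and vn: "v \<le> n - 2"
    using assms(2) unfolding seg_first_def by blast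
  have "j < n"
    using seg_state_fst_progress[OF assms(1), where n=n and w=w and j=j] vj vn by linarith
  then have "(\<Sum>i\<in>{1..v-1}. hider_y n c h w i) = (\<Sum>i\<in>{1..v-1}. snd (seg_state n c h w j) i)"
    using vj vn by (intro sum.cong refl hider_y_eq_seg_state) auto
  with seg_state_prefix_sum_ge[of c h w n j] vj show ?thesis
    by simp
qed

lemma bezout_coeff_le:
  fixes h m w c :: nat
  assumes "int h * int m - int w * int c = 1" "w < m" "1 \<le> c"
  shows "h \<le> c"
proof -
  have "int w * int c \<le> (int m - 1) * int c"
    using assms(2) by (intro mult_right_mono) auto
  then have "int h * int m \<le> int c * int m"
    using assms by (simp add: algebra_simps)
  then show ?thesis
    using assms(2) by simp
qed

lemma rr_ge_1: "0 < h \<Longrightarrow> h \<le> c \<Longrightarrow> 1 \<le> rr c h"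
  unfolding rr_def by (simp add: le_nat_iff le_floor_iff)

theorem lemma3p4:
  fixes k n h w v :: nat
  defines "c \<equiv> 2 ^ k - 2"
  assumes hk: "k \<ge> 2"
    and hn: "n > 2 ^ k"
    and hcop: "coprime c (n - 1)"
    and hpos: "h > 0" "w \<ge> 1" "w \<le> n - 2"
    and heq: "int h * int (n - 1) - int w * int c = 1"
    and hmin: "\<And>w' h'. h' > 0 \<Longrightarrow> 1 \<le> w' \<Longrightarrow> w' \<le> n - 2 \<Longrightarrow>
                 int h' * int (n - 1) - int w' * int c = 1 \<Longrightarrow> w \<le> w'"
    and hv: "seg_first n c h w v"
  shows "gfun c h w (real (v - 1)) \<le> (\<Sum>i\<in>{1..v-1}. hider_y n c h w i)
       \<and> gfun c h w (real (v + rr c h - 1)) \<le> (\<Sum>i\<in>{1..v-1}. hider_y n c h w i) + 1 / real w"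
proof -
  have "(2::nat) ^ 2 \<le> 2 ^ k"
    using hk by (intro power_increasing) auto
  then have "1 \<le> c"
    unfolding c_def by simp
  moreover have "w < n - 1"
    using hpos hn by linarith
  ultimately have "1 \<le> rr c h"
    using bezout_coeff_le[OF heq] rr_ge_1 hpos(1) by blast
  then have first: "gfun c h w (real (v - 1)) \<le> (\<Sum>i\<in>{1..v-1}. hider_y n c h w i)"
    using seg_first_prefix_sum_ge hv by blast
  have "1 \<le> v"
    using hv seg_state_fst_ge_1 unfolding seg_first_def by metis
  with first show ?thesis
    using gfun_shift_rr_le[of v c h w] by simp
qed

end
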